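(* Let $\Gamma$ be a finite simplicial graph satisfying (B1): for all non-adjacent $u,v\in V(\Gamma)$, $u\sim v$. Then for any $v\in V(\Gamma)$ with $\mathrm{st}(v)\ne\Gamma$, the graph $\Gamma-\mathrm{st}(v)$ is totally disconnected. In particular, there is a partial conjugation in $\mathrm{Aut}(A_\Gamma)$ of the form $c_{v,\{u\}}$ with $u\notin\mathrm{st}(v)$.
   Context: For $v\in V(\Gamma)$, $\mathrm{lk}(v)$ is the set of vertices adjacent to $v$ and $\mathrm{st}(v)=\mathrm{lk}(v)\cup\{v\}$ (also viewed as full subgraphs); $v\le w$ iff $\mathrm{lk}(v)\subset\mathrm{st}(w)$; $v\sim w$ iff $v\le w$ and $w\le v$. $A_\Gamma=\langle V(\Gamma)\mid [u,v]=1 \text{ whenever } u,v \text{ adjacent}\rangle$. For $v\in V(\Gamma)$ and a connected component $Y$ of $\Gamma-\mathrm{st}(v)$, the partial conjugation $c_{v,Y}$ maps $x\mapsto v^{-1}xv$ for $x\in Y$ and fixes the other vertices. *)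

theory Defs
  imports Main
begin

definition simplicial_graph :: "'a set \<Rightarrow> ('a \<Rightarrow> 'a \<Rightarrow> bool) \<Rightarrow> bool" where
  "simplicial_graph V E \<longleftrightarrow>
     (\<forall>x y. E x y \<longrightarrow> x \<in> V \<and> y \<in> V) \<and>
     (\<forall>x y. E x y \<longrightarrow> E y x) \<and> (\<forall>x. \<not> E x x)"

definition lk :: "'a set \<Rightarrow> ('a \<Rightarrow> 'a \<Rightarrow> bool) \<Rightarrow> 'a \<Rightarrow> 'a set" where
  "lk V E v = {w \<in> V. E v w}"

definition st :: "'a set \<Rightarrow> ('a \<Rightarrow> 'a \<Rightarrow> bool) \<Rightarrow> 'a \<Rightarrow> 'a set" where
  "st V E v = insert v (lk V E v)"

definition vle :: "'a set \<Rightarrow> ('a \<Rightarrow> 'a \<Rightarrow> bool) \<Rightarrow> 'a \<Rightarrow> 'a \<Rightarrow> bool" where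
  "vle V E v w \<longleftrightarrow> lk V E v \<subseteq> st V E w"

definition vequiv :: "'a set \<Rightarrow> ('a \<Rightarrow> 'a \<Rightarrow> bool) \<Rightarrow> 'a \<Rightarrow> 'a \<Rightarrow> bool" where
  "vequiv V E v w \<longleftrightarrow> vle V E v w \<and> vle V E w v"

definition condB1 :: "'a set \<Rightarrow> ('a \<Rightarrow> 'a \<Rightarrow> bool) \<Rightarrow> bool" where
  "condB1 V E \<longleftrightarrow> (\<forall>u\<in>V. \<forall>v\<in>V. \<not> E u v \<longrightarrow> vequiv V E u v)"

definition induced :: "'a set \<Rightarrow> ('a \<Rightarrow> 'a \<Rightarrow> bool) \<Rightarrow> 'a \<Rightarrow> 'a \<Rightarrow> bool" where
  "induced S E x y \<longleftrightarrow> x \<in> S \<and> y \<in> S \<and> E x y"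

definition totally_disconnected :: "'a set \<Rightarrow> ('a \<Rightarrow> 'a \<Rightarrow> bool) \<Rightarrow> bool" where
  "totally_disconnected S F \<longleftrightarrow> (\<forall>x\<in>S. \<forall>y\<in>S. \<not> F x y)"

definition component_of :: "'a set \<Rightarrow> ('a \<Rightarrow> 'a \<Rightarrow> bool) \<Rightarrow> 'a \<Rightarrow> 'a set" where
  "component_of S F x = {y \<in> S. (induced S F)\<^sup>*\<^sup>* x y}"

definition is_component :: "'a set \<Rightarrow> ('a \<Rightarrow> 'a \<Rightarrow> bool) \<Rightarrow> 'a set \<Rightarrow> bool" where
  "is_component S F Y \<longleftrightarrow> (\<exists>x\<in>S. Y = component_of S F x)"

text \<open>Partial conjugation data: the partial conjugation c_{v,Y} exists (as an
automorphism of A_Gamma) exactly when v is a vertex and Y is a connected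
component of Gamma - st(v).\<close>
definition is_partial_conjugation :: "'a set \<Rightarrow> ('a \<Rightarrow> 'a \<Rightarrow> bool) \<Rightarrow> 'a \<Rightarrow> 'a set \<Rightarrow> bool" where
  "is_partial_conjugation V E v Y \<longleftrightarrow>
     v \<in> V \<and> is_component (V - st V E v) (induced (V - st V E v) E) Y"

end

theory Submission
  imports Defs
begin

text \<open>If x, y lie outside st(v) then x and v are non-adjacent, so by (B1)
lk(x) \<subseteq> st(v); hence y \<notin> lk(x). Thus \<Gamma> - st(v) has no edges, every
vertex in it is its own component, and any u \<notin> st(v) gives c_{v,{u}}.\<close>

lemma star_subset_vertices:
  assumes "v \<in> V"
  shows "st V E v \<subseteq> V"
  using assms unfolding st_def lk_def by auto

lemma condB1_link_subset_star:
  assumes "simplicial_graph V E" and "condB1 V E"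
    and "v \<in> V" and "x \<in> V - st V E v"
  shows "lk V E x \<subseteq> st V E v"
proof -
  have "\<not> E x v"
    using assms(1,4) unfolding st_def lk_def simplicial_graph_def by auto
  then have "vequiv V E x v"
    using assms(2-4) unfolding condB1_def by auto
  then show ?thesis
    unfolding vequiv_def vle_def by auto
qed

lemma condB1_complement_of_star_totally_disconnected:
  assumes "simplicial_graph V E" and "condB1 V E" and "v \<in> V"
  shows "totally_disconnected (V - st V E v) (induced (V - st V E v) E)"
  unfolding totally_disconnected_def induced_def
  using condB1_link_subset_star[OF assms] unfolding lk_def by blast

lemma totally_disconnected_component_of:
  assumes "totally_disconnected S F" and "x \<in> S"
  shows "component_of S F x = {x}"
proof -
  have "y = x" if "(induced S F)\<^sup>*\<^sup>* x y" for y
    using that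
  proof (induction rule: rtranclp_induct)
    case (step y z)
    then show ?case
      using assms(1) unfolding totally_disconnected_def induced_def by auto
  qed simp
  then show ?thesis
    using assms(2) unfolding component_of_def by auto
qed

theorem lemma3p5:
  fixes V :: "'a set" and E :: "'a \<Rightarrow> 'a \<Rightarrow> bool" and v :: 'a
  assumes "finite V" and "simplicial_graph V E" and "condB1 V E"
    and "v \<in> V" and "st V E v \<noteq> V"
  shows "totally_disconnected (V - st V E v) (induced (V - st V E v) E)
     \<and> (\<exists>u. u \<in> V \<and> u \<notin> st V E v \<and> is_partial_conjugation V E v {u})"
proof -
  let ?S = "V - st V E v"
  have td: "totally_disconnected ?S (induced ?S E)"
    using condB1_complement_of_star_totally_disconnected assms(2-4) .
  obtain u where u: "u \<in> ?S"
    using star_subset_vertices[OF assms(4)] assms(5) by blast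
  have "is_component ?S (induced ?S E) {u}"
    unfolding is_component_def
    using totally_disconnected_component_of[OF td u] u by metis
  then show ?thesis
    using td u assms(4) unfolding is_partial_conjugation_def by blast
qed

end
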